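(* Consider a platform with effective driver arrival rate $e>0$, driver abandonment rate $\beta>0$, static price $\phi_i\in[0,\phi_h]$, and passenger arrival rate $\lambda_i(\beta)\ge0$, where $\lambda_i(\beta)\to\lambda_i$ as $\beta\to0$. Let $\mathcal D_i(\phi_i;\lambda_i(\beta),\beta)=\bigl(\sum_{n\ge0}\frac{e^n}{\prod_{a=1}^n(\lambda_i(\beta)f(\phi_i)+a\beta)}\bigr)^{-1}$ and $\mathcal M_i(\phi_i;\lambda_i(\beta),\beta)=\lambda_i(\beta)f(\phi_i)\phi_i\bigl(1-\mathcal D_i(\phi_i;\lambda_i(\beta),\beta)\bigr)$. Then as $\beta\to0$, $$\mathcal M_i\to\tilde{\mathcal M}_i(\phi_i)=\begin{cases}e\phi_i&\text{if } \frac{e}{\lambda_i f(\phi_i)}<1,\\ \lambda_i f(\phi_i)\phi_i&\text{otherwise,}\end{cases}\qquad \mathcal D_i\to\tilde{\mathcal D}_i(\phi_i;\lambda_i)=\Bigl(1-\frac{e}{\lambda_i f(\phi_i)}\Bigr)^+.$$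
   Context: $f:[0,\phi_h]\to(0,1]$ is strictly concave, strictly decreasing, differentiable with $f(0)=1$ (passenger acceptance probability of price $\phi$). $\mathcal D_i$ is the stationary probability of no waiting driver and $\mathcal M_i$ the long-run matching revenue rate of a platform where passengers arrive Poisson at rate $\lambda_i(\beta)$ and drivers (effective rate $e$) wait and abandon at rate $\beta$. Convention: $e/0=+\infty$. *)

theory Defs
  imports "HOL-Analysis.Analysis"
begin

definition strictly_concave_on :: "real set \<Rightarrow> (real \<Rightarrow> real) \<Rightarrow> bool" where
  "strictly_concave_on S f \<longleftrightarrow> convex S \<and>
     (\<forall>x\<in>S. \<forall>y\<in>S. x \<noteq> y \<longrightarrow> (\<forall>t::real. 0 < t \<and> t < 1 \<longrightarrow>
        f ((1 - t) * x + t * y) > (1 - t) * f x + t * f y))"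

text \<open>Stationary probability of no waiting driver:
  D = (sum_{n>=0} e^n / prod_{a=1}^n (lam f(phi) + a beta))^{-1}.\<close>
definition Dprob :: "(real \<Rightarrow> real) \<Rightarrow> real \<Rightarrow> real \<Rightarrow> real \<Rightarrow> real \<Rightarrow> real" where
  "Dprob f e phi lam beta =
     inverse (\<Sum>n. e ^ n / (\<Prod>a=1..n. lam * f phi + real a * beta))"

definition Mrev :: "(real \<Rightarrow> real) \<Rightarrow> real \<Rightarrow> real \<Rightarrow> real \<Rightarrow> real \<Rightarrow> real" where
  "Mrev f e phi lam beta = lam * f phi * phi * (1 - Dprob f e phi lam beta)"

text \<open>e / (lam f(phi)) < 1, with the convention e/0 = +infinity (so false when lam f(phi) = 0).\<close>
definition ratio_lt_1 :: "(real \<Rightarrow> real) \<Rightarrow> real \<Rightarrow> real \<Rightarrow> real \<Rightarrow> bool" where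
  "ratio_lt_1 f e phi lam \<longleftrightarrow> lam * f phi \<noteq> 0 \<and> e / (lam * f phi) < 1"

definition Mlim :: "(real \<Rightarrow> real) \<Rightarrow> real \<Rightarrow> real \<Rightarrow> real \<Rightarrow> real" where
  "Mlim f e phi lam = (if ratio_lt_1 f e phi lam then e * phi else lam * f phi * phi)"

text \<open>(1 - e/(lam f(phi)))^+ with e/0 = +infinity, i.e. value 0 when lam f(phi) = 0.\<close>
definition Dlim :: "(real \<Rightarrow> real) \<Rightarrow> real \<Rightarrow> real \<Rightarrow> real \<Rightarrow> real" where
  "Dlim f e phi lam = (if lam * f phi = 0 then 0 else max 0 (1 - e / (lam * f phi)))"

end

theory Submission
  imports Defs
begin

text \<open>Dprob is 1/Z, where Z = sum_n e^n / prod_{a=1..n} (c + a beta) with c = lam f(phi) is the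
  normalising constant of the stationary law of the number of waiting drivers. As beta -> 0 each
  term tends to (e/c)^n, so Z eventually exceeds every partial geometric sum of ratio e/c. For
  c > e the termwise bound (e/c)^n also gives Z <= c/(c - e), hence Z -> c/(c - e) and
  1/Z -> 1 - e/c. For c <= e the geometric partial sums are unbounded (for c = 0 already the term
  e/(c + beta) blows up), so 1/Z -> 0. The limit of Mrev follows by continuity.\<close>

definition normaliser :: "real \<Rightarrow> real \<Rightarrow> real \<Rightarrow> real" where
  "normaliser e c b = (\<Sum>n. e ^ n / (\<Prod>a=1..n. c + real a * b))"

lemma Dprob_eq_inverse_normaliser:
  "Dprob f e phi lam beta = inverse (normaliser e (lam * f phi) beta)"
  by (simp add: Dprob_def normaliser_def)

lemma prod_rates_pos:
  fixes c b :: real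
  assumes "c \<ge> 0" "b > 0"
  shows "0 < (\<Prod>a=1..n. c + real a * b)"
  using assms by (intro prod_pos) (auto simp: add_nonneg_pos)

lemma fact_mult_power_le_prod_rates:
  fixes c b :: real
  assumes "c \<ge> 0" "b > 0"
  shows "fact n * b ^ n \<le> (\<Prod>a=1..n. c + real a * b)"
proof (induction n)
  case 0
  then show ?case by simp
next
  case (Suc n)
  have "fact (Suc n) * b ^ Suc n = (fact n * b ^ n) * (real (Suc n) * b)"
    by (simp add: algebra_simps)
  also have "\<dots> \<le> (\<Prod>a=1..n. c + real a * b) * (c + real (Suc n) * b)"
    using Suc assms prod_rates_pos[OF assms, of n] by (intro mult_mono) auto
  also have "\<dots> = (\<Prod>a=1..Suc n. c + real a * b)"
    by simp
  finally show ?case .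
qed

lemma power_le_prod_rates:
  fixes c b :: real
  assumes "c \<ge> 0" "b \<ge> 0"
  shows "c ^ n \<le> (\<Prod>a=1..n. c + real a * b)"
proof -
  have "c ^ n = (\<Prod>a=1..n. c)" by simp
  also have "\<dots> \<le> (\<Prod>a=1..n. c + real a * b)"
    using assms by (intro prod_mono) auto
  finally show ?thesis .
qed

lemma summable_normaliser:
  fixes c b e :: real
  assumes "c \<ge> 0" "b > 0"
  shows "summable (\<lambda>n. e ^ n / (\<Prod>a=1..n. c + real a * b))"
proof (rule summable_comparison_test)
  show "summable (\<lambda>n. inverse (fact n) * (\<bar>e\<bar> / b) ^ n)"
    by (rule summable_exp)
  show "\<exists>N. \<forall>n\<ge>N. norm (e ^ n / (\<Prod>a=1..n. c + real a * b)) \<le> inverse (fact n) * (\<bar>e\<bar> / b) ^ n"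
  proof (intro exI allI impI)
    fix n :: nat
    have "norm (e ^ n / (\<Prod>a=1..n. c + real a * b)) = \<bar>e\<bar> ^ n / (\<Prod>a=1..n. c + real a * b)"
      using prod_rates_pos[OF assms, of n] by (simp add: power_abs)
    also have "\<dots> \<le> \<bar>e\<bar> ^ n / (fact n * b ^ n)"
      using assms fact_mult_power_le_prod_rates[OF assms] prod_rates_pos[OF assms, of n]
      by (intro divide_left_mono mult_pos_pos) auto
    also have "\<dots> = inverse (fact n) * (\<bar>e\<bar> / b) ^ n"
      by (simp add: field_simps)
    finally show "norm (e ^ n / (\<Prod>a=1..n. c + real a * b)) \<le> inverse (fact n) * (\<bar>e\<bar> / b) ^ n" .
  qed
qed

lemma partial_sum_le_normaliser:
  fixes c b e :: real
  assumes "c \<ge> 0" "b > 0" "e \<ge> 0"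
  shows "(\<Sum>n<N. e ^ n / (\<Prod>a=1..n. c + real a * b)) \<le> normaliser e c b"
  unfolding normaliser_def
  using assms prod_rates_pos[OF assms(1,2)]
  by (intro sum_le_suminf summable_normaliser) (auto intro!: divide_nonneg_pos)

lemma normaliser_le:
  fixes c b e :: real
  assumes "0 \<le> e" "e < c" "b > 0"
  shows "normaliser e c b \<le> c / (c - e)"
proof -
  have c: "c \<ge> 0" using assms by simp
  have geom: "(\<lambda>n. (e / c) ^ n) sums (c / (c - e))"
    using geometric_sums[of "e / c"] assms by (simp add: field_simps)
  have "normaliser e c b \<le> (\<Sum>n. (e / c) ^ n)"
    unfolding normaliser_def
  proof (rule suminf_le)
    fix n
    have "e ^ n / (\<Prod>a=1..n. c + real a * b) \<le> e ^ n / c ^ n"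
      using assms power_le_prod_rates[OF c, of b n] prod_rates_pos[OF c assms(3), of n]
      by (intro divide_left_mono mult_pos_pos) auto
    then show "e ^ n / (\<Prod>a=1..n. c + real a * b) \<le> (e / c) ^ n"
      by (simp add: power_divide)
  qed (use summable_normaliser[OF c assms(3)] geom in \<open>auto simp: sums_iff\<close>)
  also have "\<dots> = c / (c - e)"
    using geom by (simp add: sums_iff)
  finally show ?thesis .
qed

lemma tendsto_partial_sum_normaliser:
  fixes g :: "real \<Rightarrow> real"
  assumes "(g \<longlongrightarrow> c) (at_right 0)" "c > 0"
  shows "((\<lambda>b. \<Sum>n<N. e ^ n / (\<Prod>a=1..n. g b + real a * b)) \<longlongrightarrow> (\<Sum>n<N. (e / c) ^ n))
           (at_right 0)"
proof -
  have "((\<lambda>b. \<Sum>n<N. e ^ n / (\<Prod>a=1..n. g b + real a * b))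
          \<longlongrightarrow> (\<Sum>n<N. e ^ n / (\<Prod>a=1..n. c + real a * 0))) (at_right 0)"
    using assms by (intro tendsto_intros) auto
  then show ?thesis
    by (simp add: power_divide)
qed

lemma eventually_normaliser_gt:
  fixes g :: "real \<Rightarrow> real"
  assumes "(g \<longlongrightarrow> c) (at_right 0)" "c > 0" "eventually (\<lambda>b. g b \<ge> 0) (at_right 0)" "e \<ge> 0"
    and "K < (\<Sum>n<N. (e / c) ^ n)"
  shows "eventually (\<lambda>b. K < normaliser e (g b) b) (at_right 0)"
proof -
  have "eventually (\<lambda>b. K < (\<Sum>n<N. e ^ n / (\<Prod>a=1..n. g b + real a * b))) (at_right 0)"
    using tendsto_partial_sum_normaliser[OF assms(1,2)] assms(5) by (rule order_tendstoD(1))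
  moreover note assms(3)
  moreover have "eventually (\<lambda>b::real. b > 0) (at_right 0)"
    by (simp add: eventually_at_right_less)
  ultimately show ?thesis
  proof eventually_elim
    case (elim b)
    then show ?case
      using assms(4) partial_sum_le_normaliser[of "g b" b e N] by linarith
  qed
qed

lemma normaliser_at_top:
  fixes g :: "real \<Rightarrow> real"
  assumes g: "(g \<longlongrightarrow> c) (at_right 0)" "eventually (\<lambda>b. g b \<ge> 0) (at_right 0)"
    and "c \<le> e" "e > 0"
  shows "filterlim (\<lambda>b. normaliser e (g b) b) at_top (at_right 0)"
proof -
  have pos: "eventually (\<lambda>b::real. b > 0) (at_right 0)"
    by (simp add: eventually_at_right_less)
  have c: "c \<ge> 0"
    using g by (rule tendsto_lowerbound) simp
  show ?thesis
  proof (cases "c = 0")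
    case True
    have "((\<lambda>b. g b + b) \<longlongrightarrow> 0) (at_right 0)"
      using g True by (intro tendsto_add_zero tendsto_ident_at) auto
    moreover have "eventually (\<lambda>b. 0 < g b + b) (at_right 0)"
      using g(2) pos by eventually_elim auto
    ultimately have "filterlim (\<lambda>b. e / (g b + b)) at_top (at_right 0)"
      using \<open>e > 0\<close> by (intro LIM_at_top_divide) auto
    moreover have "eventually (\<lambda>b. e / (g b + b) \<le> normaliser e (g b) b) (at_right 0)"
      using g(2) pos
    proof eventually_elim
      case (elim b)
      have "e / (g b + b) \<le> (\<Sum>n<2. e ^ n / (\<Prod>a=1..n. g b + real a * b))"
        by (simp add: numeral_2_eq_2)
      also have "\<dots> \<le> normaliser e (g b) b"
        using elim \<open>e > 0\<close> by (intro partial_sum_le_normaliser) auto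
      finally show ?case .
    qed
    ultimately show ?thesis
      by (rule filterlim_at_top_mono)
  next
    case False
    with c have "c > 0" by simp
    show ?thesis
      unfolding filterlim_at_top
    proof
      fix K :: real
      obtain N :: nat where N: "K < real N"
        using reals_Archimedean2 by blast
      have "real N = (\<Sum>n<N. (1::real))" by simp
      also have "\<dots> \<le> (\<Sum>n<N. (e / c) ^ n)"
        using \<open>c > 0\<close> \<open>c \<le> e\<close> by (intro sum_mono one_le_power) simp
      finally have "K < (\<Sum>n<N. (e / c) ^ n)"
        using N by linarith
      then have "eventually (\<lambda>b. K < normaliser e (g b) b) (at_right 0)"
        using g \<open>c > 0\<close> \<open>e > 0\<close> by (intro eventually_normaliser_gt) auto
      then show "eventually (\<lambda>b. K \<le> normaliser e (g b) b) (at_right 0)"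
        by eventually_elim simp
    qed
  qed
qed

lemma tendsto_normaliser:
  fixes g :: "real \<Rightarrow> real"
  assumes g: "(g \<longlongrightarrow> c) (at_right 0)" "eventually (\<lambda>b. g b \<ge> 0) (at_right 0)"
    and "0 < e" "e < c"
  shows "((\<lambda>b. normaliser e (g b) b) \<longlongrightarrow> c / (c - e)) (at_right 0)"
proof (rule order_tendstoI)
  fix K assume "K < c / (c - e)"
  moreover have "(\<lambda>N. \<Sum>n<N. (e / c) ^ n) \<longlonglongrightarrow> c / (c - e)"
    using geometric_sums[of "e / c"] assms by (simp add: sums_def field_simps)
  ultimately have "eventually (\<lambda>N. K < (\<Sum>n<N. (e / c) ^ n)) sequentially"
    by (rule order_tendstoD(1)[rotated])
  then obtain N where "K < (\<Sum>n<N. (e / c) ^ n)"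
    by (auto simp: eventually_sequentially)
  then show "eventually (\<lambda>b. K < normaliser e (g b) b) (at_right 0)"
    using assms by (intro eventually_normaliser_gt) auto
next
  fix K assume "c / (c - e) < K"
  moreover have "((\<lambda>b. g b / (g b - e)) \<longlongrightarrow> c / (c - e)) (at_right 0)"
    using assms by (intro tendsto_divide tendsto_diff tendsto_const g) auto
  ultimately have "eventually (\<lambda>b. g b / (g b - e) < K) (at_right 0)"
    by (rule order_tendstoD(2)[rotated])
  moreover have "eventually (\<lambda>b. e < g b) (at_right 0)"
    using g(1) \<open>e < c\<close> by (rule order_tendstoD(1))
  moreover have "eventually (\<lambda>b::real. b > 0) (at_right 0)"
    by (simp add: eventually_at_right_less)
  ultimately show "eventually (\<lambda>b. normaliser e (g b) b < K) (at_right 0)"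
  proof eventually_elim
    case (elim b)
    then show ?case
      using \<open>e > 0\<close> normaliser_le[of e "g b" b] by linarith
  qed
qed

lemma tendsto_inverse_normaliser:
  fixes g :: "real \<Rightarrow> real"
  assumes g: "(g \<longlongrightarrow> c) (at_right 0)" "eventually (\<lambda>b. g b \<ge> 0) (at_right 0)"
    and "e > 0"
  shows "((\<lambda>b. inverse (normaliser e (g b) b)) \<longlongrightarrow>
           (if c = 0 then 0 else max 0 (1 - e / c))) (at_right 0)"
proof (cases "e < c")
  case True
  then have "((\<lambda>b. inverse (normaliser e (g b) b)) \<longlongrightarrow> inverse (c / (c - e))) (at_right 0)"
    using assms by (intro tendsto_inverse tendsto_normaliser) auto
  moreover have "inverse (c / (c - e)) = (if c = 0 then 0 else max 0 (1 - e / c))"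
    using True \<open>e > 0\<close> by (simp add: field_simps)
  ultimately show ?thesis by simp
next
  case False
  then have "((\<lambda>b. inverse (normaliser e (g b) b)) \<longlongrightarrow> 0) (at_right 0)"
    using assms by (intro tendsto_inverse_0_at_top normaliser_at_top) auto
  moreover have "(if c = 0 then 0 else max 0 (1 - e / c)) = 0"
    using False tendsto_lowerbound[OF g] by (auto simp: le_divide_eq_1)
  ultimately show ?thesis by simp
qed

lemma Mlim_eq:
  "Mlim f e phi lam = lam * f phi * phi * (1 - Dlim f e phi lam)"
proof (cases "ratio_lt_1 f e phi lam")
  case True
  then have "lam * f phi \<noteq> 0" and "Dlim f e phi lam = 1 - e / (lam * f phi)"
    unfolding ratio_lt_1_def Dlim_def by auto
  then have "e * phi = lam * f phi * phi * (1 - Dlim f e phi lam)"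
    by simp
  then show ?thesis
    using True unfolding Mlim_def by (simp only: if_True)
next
  case False
  then have "Dlim f e phi lam = 0 \<or> lam * f phi = 0"
    unfolding Dlim_def ratio_lt_1_def by auto
  then show ?thesis
    using False unfolding Mlim_def by auto
qed

theorem lemma4:
  fixes f :: "real \<Rightarrow> real" and phi_h e phi lam :: real and lamb :: "real \<Rightarrow> real"
  assumes "phi_h > 0"
    and "strictly_concave_on {0..phi_h} f"
    and "strict_antimono_on {0..phi_h} f"
    and "f differentiable_on {0..phi_h}"
    and "f 0 = 1"
    and "\<forall>x\<in>{0..phi_h}. 0 < f x \<and> f x \<le> 1"
    and "e > 0"
    and "phi \<in> {0..phi_h}"
    and "\<forall>beta>0. lamb beta \<ge> 0"
    and "(lamb \<longlongrightarrow> lam) (at_right 0)"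
  shows "((\<lambda>beta. Mrev f e phi (lamb beta) beta) \<longlongrightarrow> Mlim f e phi lam) (at_right 0) \<and>
         ((\<lambda>beta. Dprob f e phi (lamb beta) beta) \<longlongrightarrow> Dlim f e phi lam) (at_right 0)"
proof -
  \<comment> \<open>of the hypotheses on \<open>f\<close>, only \<open>f phi > 0\<close> is needed here\<close>
  have "f phi > 0"
    using assms(6,8) by auto
  have "eventually (\<lambda>beta. lamb beta * f phi \<ge> 0) (at_right 0)"
    using assms(9) \<open>f phi > 0\<close> by (auto simp: eventually_at_filter)
  moreover have "((\<lambda>beta. lamb beta * f phi) \<longlongrightarrow> lam * f phi) (at_right 0)"
    using assms(10) by (rule tendsto_mult_right)
  ultimately have D: "((\<lambda>beta. Dprob f e phi (lamb beta) beta) \<longlongrightarrow> Dlim f e phi lam) (at_right 0)"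
    unfolding Dprob_eq_inverse_normaliser Dlim_def
    using tendsto_inverse_normaliser assms(7) by blast
  then have "((\<lambda>beta. Mrev f e phi (lamb beta) beta) \<longlongrightarrow> Mlim f e phi lam) (at_right 0)"
    unfolding Mrev_def Mlim_eq by (intro tendsto_intros assms(10))
  from this D show ?thesis ..
qed

end
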